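(* For every $k\ge1$, $G_k\cong\mathrm{Syl}_2 A_{2^k}$, the Sylow $2$-subgroup of the alternating group $A_{2^k}$.
   Context: Let $C_2=\{e,\sigma\}$ with $\sigma=(1,2)$ acting on $X=\{1,2\}$. Define $B_1=C_2$ and $B_k=B_{k-1}\wr C_2$ for $k>1$, with elements written as wreath recursions $(g_1,g_2)\pi$, $g_1,g_2\in B_{k-1}$, $\pi\in C_2$, and multiplication $(g_1,g_2)\pi\cdot(h_1,h_2)\rho=(g_1h_{\pi(1)},g_2h_{\pi(2)})\pi\rho$; $B_k$ acts faithfully on the set $X^k$ of words of length $k$ (of size $2^k$). Define $G_1=\{e\}$ and, for $k>1$, $G_k=\{(g_1,g_2)\pi\in B_k : g_1g_2\in G_{k-1}\}$. *)

theory Defs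
  imports "HOL-Algebra.Sym_Groups" "HOL-Computational_Algebra.Primes"
begin

(* Elements of the iterated wreath products, written as wreath recursions.
   WLeaf b  : element of B_1 = C_2 (b = True means sigma = (1,2)).
   WNode g1 g2 b : the wreath recursion (g1,g2)pi, pi = sigma iff b. *)
datatype wr = WLeaf bool | WNode wr wr bool

(* pi(1) = 2 iff pi = sigma; multiplication
   (g1,g2)pi * (h1,h2)rho = (g1 h_{pi(1)}, g2 h_{pi(2)}) pi rho *)
fun wmult :: "wr \<Rightarrow> wr \<Rightarrow> wr" where
  "wmult (WLeaf a) (WLeaf b) = WLeaf (a \<noteq> b)"
| "wmult (WNode g1 g2 p) (WNode h1 h2 r) =
     WNode (wmult g1 (if p then h2 else h1)) (wmult g2 (if p then h1 else h2)) (p \<noteq> r)"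
| "wmult _ _ = WLeaf False"

fun wone :: "nat \<Rightarrow> wr" where
  "wone 0 = WLeaf False"
| "wone (Suc 0) = WLeaf False"
| "wone (Suc (Suc k)) = WNode (wone (Suc k)) (wone (Suc k)) False"

fun Bset :: "nat \<Rightarrow> wr set" where
  "Bset 0 = {}"
| "Bset (Suc 0) = range WLeaf"
| "Bset (Suc (Suc k)) = {WNode g1 g2 p | g1 g2 p. g1 \<in> Bset (Suc k) \<and> g2 \<in> Bset (Suc k)}"

fun Gset :: "nat \<Rightarrow> wr set" where
  "Gset 0 = {}"
| "Gset (Suc 0) = {WLeaf False}"
| "Gset (Suc (Suc k)) = {WNode g1 g2 p | g1 g2 p. g1 \<in> Bset (Suc k) \<and> g2 \<in> Bset (Suc k)
                                             \<and> wmult g1 g2 \<in> Gset (Suc k)}"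

definition Bgrp :: "nat \<Rightarrow> wr monoid" where
  "Bgrp k = \<lparr>carrier = Bset k, mult = wmult, one = wone k\<rparr>"

definition Ggrp :: "nat \<Rightarrow> wr monoid" where
  "Ggrp k = \<lparr>carrier = Gset k, mult = wmult, one = wone k\<rparr>"

definition sylow_subgroup :: "nat \<Rightarrow> 'a set \<Rightarrow> ('a, 'b) monoid_scheme \<Rightarrow> bool" where
  "sylow_subgroup p H G \<longleftrightarrow> subgroup H G \<and> card H = p ^ multiplicity p (order G)"

end

theory Submission
  imports Defs
begin

(* Number the words of X^k by 0..2^k-1, the binary digits read lowest first being the letters
   (letter 1 as digit 0). Then B_k acts faithfully on {0..<2^k}, and the permutation of
   (g1,g2)pi is the product of copies of g1 and g2 on the even and odd positions with, if
   pi = sigma, a product of 2^(k-1) disjoint transpositions, which is even for k >= 2. Hence the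
   sign of (g1,g2)pi is the sign of g1 g2, and by induction G_k is exactly the preimage of the
   alternating group. As B_k contains odd elements, |G_k| = |B_k|/2 = 2^(2^k-2), which by
   Legendre's formula is the 2-part of |A_(2^k)| = (2^k)!/2. *)

fun wact :: "wr \<Rightarrow> nat \<Rightarrow> nat" where
  "wact (WLeaf b) n = (if b \<and> n < 2 then 1 - n else n)"
| "wact (WNode g1 g2 p) n =
     (if odd n = p then 2 * wact g1 (n div 2) else 2 * wact g2 (n div 2) + 1)"

fun winv :: "wr \<Rightarrow> wr" where
  "winv (WLeaf b) = WLeaf b"
| "winv (WNode g1 g2 p) = WNode (winv (if p then g2 else g1)) (winv (if p then g1 else g2)) p"

lemma wmult_in_Bset: "g \<in> Bset (Suc k) \<Longrightarrow> h \<in> Bset (Suc k) \<Longrightarrow> wmult g h \<in> Bset (Suc k)"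
  by (induct k arbitrary: g h) auto

lemma winv_in_Bset: "g \<in> Bset (Suc k) \<Longrightarrow> winv g \<in> Bset (Suc k)"
  by (induct k arbitrary: g) auto

lemma wone_in_Bset: "wone (Suc k) \<in> Bset (Suc k)"
  by (induct k) auto

lemma wmult_wone: "g \<in> Bset (Suc k) \<Longrightarrow> wmult g (wone (Suc k)) = g"
  by (induct k arbitrary: g) auto

lemma wmult_winv: "g \<in> Bset (Suc k) \<Longrightarrow> wmult g (winv g) = wone (Suc k)"
  by (induct k arbitrary: g) auto

lemma wmult_winv_left: "g \<in> Bset (Suc k) \<Longrightarrow> wmult (winv g) g = wone (Suc k)"
  by (induct k arbitrary: g) auto

lemma wact_less: "g \<in> Bset (Suc k) \<Longrightarrow> n < 2 ^ Suc k \<Longrightarrow> wact g n < 2 ^ Suc k"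
proof (induct k arbitrary: g n)
  case (Suc k)
  then obtain g1 g2 p where "g = WNode g1 g2 p" "g1 \<in> Bset (Suc k)" "g2 \<in> Bset (Suc k)"
    by auto
  moreover have "n div 2 < 2 ^ Suc k"
    using Suc.prems by auto
  ultimately show ?case
    using Suc.hyps by fastforce
qed auto

lemma wact_wone: "wact (wone k) n = n"
  by (induct k arbitrary: n rule: wone.induct) auto

lemma wact_wmult:
  "g \<in> Bset (Suc k) \<Longrightarrow> h \<in> Bset (Suc k) \<Longrightarrow> n < 2 ^ Suc k \<Longrightarrow>
   wact (wmult g h) n = wact g (wact h n)"
  by (induct k arbitrary: g h n) (auto simp: less_mult_imp_div_less)

lemma wact_inj:
  assumes "g \<in> Bset (Suc k)" "h \<in> Bset (Suc k)" "\<And>n. n < 2 ^ Suc k \<Longrightarrow> wact g n = wact h n"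
  shows "g = h"
  using assms
proof (induct k arbitrary: g h)
  case 0
  then obtain a b where "g = WLeaf a" "h = WLeaf b"
    by auto
  then show ?case
    using "0.prems"(3)[of 0] by (cases a; cases b) auto
next
  case (Suc k)
  then obtain g1 g2 p h1 h2 r where g: "g = WNode g1 g2 p" "g1 \<in> Bset (Suc k)" "g2 \<in> Bset (Suc k)"
    and h: "h = WNode h1 h2 r" "h1 \<in> Bset (Suc k)" "h2 \<in> Bset (Suc k)"
    by auto
  have "odd (wact g 0) \<longleftrightarrow> p" "odd (wact h 0) \<longleftrightarrow> r"
    using g h by auto
  then have "p = r"
    using Suc.prems(3)[of 0] by auto
  have "wact g1 m = wact h1 m \<and> wact g2 m = wact h2 m" if "m < 2 ^ Suc k" for m
  proof -
    have "2 * m + of_bool p < 2 ^ Suc (Suc k)" "2 * m + of_bool (\<not> p) < 2 ^ Suc (Suc k)"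
      using that by auto
    then show ?thesis
      using Suc.prems(3)[of "2 * m + of_bool p"] Suc.prems(3)[of "2 * m + of_bool (\<not> p)"]
        g h \<open>p = r\<close> by (cases p) auto
  qed
  then show ?case
    using Suc.hyps[of g1 h1] Suc.hyps[of g2 h2] g h \<open>p = r\<close> by auto
qed

definition wperm0 :: "nat \<Rightarrow> wr \<Rightarrow> nat \<Rightarrow> nat" where
  "wperm0 k g = restrict_id (wact g) {0..<2 ^ k}"

lemma wperm0_wmult:
  assumes "g \<in> Bset (Suc k)" "h \<in> Bset (Suc k)"
  shows "wperm0 (Suc k) (wmult g h) = wperm0 (Suc k) g \<circ> wperm0 (Suc k) h"
  using assms wact_less[OF assms(2)] by (auto simp: fun_eq_iff wperm0_def restrict_id_def wact_wmult)

lemma wperm0_wone: "wperm0 k (wone k) = id"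
  by (auto simp: wperm0_def restrict_id_def wact_wone)

lemma wperm0_permutes:
  assumes "g \<in> Bset (Suc k)"
  shows "wperm0 (Suc k) g permutes {0..<2 ^ Suc k}"
  unfolding wperm0_def
proof (intro permutes_restrict_id bij_betw_byWitness[where f' = "wact (winv g)"])
  have "winv g \<in> Bset (Suc k)"
    using assms by (rule winv_in_Bset)
  then show "\<forall>n\<in>{0..<2 ^ Suc k}. wact (winv g) (wact g n) = n"
    "\<forall>n\<in>{0..<2 ^ Suc k}. wact g (wact (winv g) n) = n"
    "wact g ` {0..<2 ^ Suc k} \<subseteq> {0..<2 ^ Suc k}"
    "wact (winv g) ` {0..<2 ^ Suc k} \<subseteq> {0..<2 ^ Suc k}"
    using assms wact_less[OF assms] wact_less[OF \<open>winv g \<in> Bset (Suc k)\<close>]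
    by (auto simp: wmult_winv wmult_winv_left wact_wone simp flip: wact_wmult)
qed

lemma wperm0_inj:
  assumes "g \<in> Bset (Suc k)" "h \<in> Bset (Suc k)" "wperm0 (Suc k) g = wperm0 (Suc k) h"
  shows "g = h"
proof (rule wact_inj[OF assms(1,2)])
  show "wact g n = wact h n" if "n < 2 ^ Suc k" for n
    using fun_cong[OF assms(3), of n] that by (simp add: wperm0_def restrict_id_def)
qed

definition swap_pairs :: "nat \<Rightarrow> nat \<Rightarrow> nat" where
  "swap_pairs n i = (if i < 2 * n then if even i then i + 1 else i - 1 else i)"

lemma swap_pairs_Suc: "swap_pairs (Suc n) = transpose (2 * n) (2 * n + 1) \<circ> swap_pairs n"
  by (auto simp: fun_eq_iff swap_pairs_def transpose_def) presburger+

lemma swap_pairs_permutes: "swap_pairs n permutes {0..<2 * n}"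
  and evenperm_swap_pairs: "evenperm (swap_pairs n) \<longleftrightarrow> even n"
proof (induct n)
  case 0
  have "swap_pairs 0 = id"
    by (auto simp: fun_eq_iff swap_pairs_def)
  then show "swap_pairs 0 permutes {0..<2 * 0}" "evenperm (swap_pairs 0) \<longleftrightarrow> even (0::nat)"
    by (simp_all add: permutes_id)
next
  case (Suc n)
  have "transpose (2 * n) (2 * n + 1) permutes {0..<2 * Suc n}"
    by (intro permutes_swap_id) auto
  moreover have "swap_pairs n permutes {0..<2 * Suc n}"
    using Suc.hyps(1) by (rule permutes_subset) auto
  ultimately show "swap_pairs (Suc n) permutes {0..<2 * Suc n}"
    unfolding swap_pairs_Suc by (rule permutes_compose[rotated])
  have "permutation (swap_pairs n)"
    using Suc.hyps(1) permutation_permutes by blast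
  then show "evenperm (swap_pairs (Suc n)) \<longleftrightarrow> even (Suc n)"
    using Suc.hyps(2) by (simp add: swap_pairs_Suc evenperm_comp permutation_swap_id evenperm_swap)
qed

lemma map_permutation_digit:
  fixes q :: "nat \<Rightarrow> nat"
  assumes "q permutes {0..<n}"
  shows "map_permutation {0..<n} (\<lambda>m. 2 * m + of_bool b) q i =
           (if odd i = b then 2 * q (i div 2) + of_bool b else i)"
proof (cases "odd i = b \<and> i div 2 < n")
  case True
  then have "i = 2 * (i div 2) + of_bool b"
    by auto
  then show ?thesis
    using True map_permutation_apply[of "\<lambda>m. 2 * m + of_bool b" "{0..<n}" "i div 2" q]
    by (auto simp: inj_on_def)
next
  case False
  have "i \<notin> (\<lambda>m. 2 * m + of_bool b) ` {0..<n}"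
    using False by auto
  moreover have "odd i = b \<Longrightarrow> 2 * q (i div 2) + of_bool b = i"
    using False permutes_not_in[OF assms, of "i div 2"] by auto
  ultimately show ?thesis
    by (auto simp: map_permutation_def restrict_id_def)
qed

lemma wperm0_WNode:
  assumes "g1 \<in> Bset (Suc k)" "g2 \<in> Bset (Suc k)"
  defines "A \<equiv> {0..<2 ^ Suc k}"
  shows "wperm0 (Suc (Suc k)) (WNode g1 g2 p) =
           map_permutation A (\<lambda>m. 2 * m) (wperm0 (Suc k) g1) \<circ>
           map_permutation A (\<lambda>m. 2 * m + 1) (wperm0 (Suc k) g2) \<circ>
           (if p then swap_pairs (2 ^ Suc k) else id)"
proof
  fix i
  have low: "map_permutation A (\<lambda>m. 2 * m) (wperm0 (Suc k) g1) j =
               (if even j then 2 * wperm0 (Suc k) g1 (j div 2) else j)" for j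
    using map_permutation_digit[OF wperm0_permutes[OF assms(1)], of False j] by (simp add: A_def)
  have high: "map_permutation A (\<lambda>m. 2 * m + 1) (wperm0 (Suc k) g2) j =
               (if odd j then 2 * wperm0 (Suc k) g2 (j div 2) + 1 else j)" for j
    using map_permutation_digit[OF wperm0_permutes[OF assms(2)], of True j] by (simp add: A_def)
  let ?j = "(if p then swap_pairs (2 ^ Suc k) else id) i"
  have "?j div 2 = i div 2"
    by (auto simp: swap_pairs_def) presburger+
  moreover have "odd ?j \<longleftrightarrow> odd i \<noteq> p" if "i < 2 ^ Suc (Suc k)"
    using that by (auto simp: swap_pairs_def)
  moreover have "?j = i" if "\<not> i < 2 ^ Suc (Suc k)"
    using that by (auto simp: swap_pairs_def)
  moreover have "i < 2 ^ Suc (Suc k) \<longleftrightarrow> i div 2 < 2 ^ Suc k"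
    by auto
  moreover have "wact g1 (i div 2) < 2 ^ Suc k" "wact g2 (i div 2) < 2 ^ Suc k"
    if "i div 2 < 2 ^ Suc k"
    using wact_less assms(1,2) that by blast+
  ultimately show "wperm0 (Suc (Suc k)) (WNode g1 g2 p) i = (map_permutation A (\<lambda>m. 2 * m)
           (wperm0 (Suc k) g1) \<circ> map_permutation A (\<lambda>m. 2 * m + 1) (wperm0 (Suc k) g2) \<circ>
           (if p then swap_pairs (2 ^ Suc k) else id)) i"
    unfolding o_apply low high by (cases "i < 2 ^ Suc (Suc k)") (auto simp: wperm0_def restrict_id_def)
qed

lemma permutation_wperm0: "g \<in> Bset (Suc k) \<Longrightarrow> permutation (wperm0 (Suc k) g)"
  using wperm0_permutes permutation_permutes by blast

lemma evenperm_wperm0_wmult: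
  assumes "g \<in> Bset (Suc k)" "h \<in> Bset (Suc k)"
  shows "evenperm (wperm0 (Suc k) (wmult g h)) \<longleftrightarrow>
           (evenperm (wperm0 (Suc k) g) \<longleftrightarrow> evenperm (wperm0 (Suc k) h))"
  using assms by (simp add: wperm0_wmult evenperm_comp permutation_wperm0)

lemma evenperm_wperm0_WNode:
  assumes "g1 \<in> Bset (Suc k)" "g2 \<in> Bset (Suc k)"
  shows "evenperm (wperm0 (Suc (Suc k)) (WNode g1 g2 p)) \<longleftrightarrow>
           (evenperm (wperm0 (Suc k) g1) \<longleftrightarrow> evenperm (wperm0 (Suc k) g2))"
proof -
  let ?A = "{0..<2 ^ Suc k} :: nat set"
  have lift: "permutation (map_permutation ?A f (wperm0 (Suc k) g)) \<and>
      (evenperm (map_permutation ?A f (wperm0 (Suc k) g)) \<longleftrightarrow> evenperm (wperm0 (Suc k) g))"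
    if "g \<in> Bset (Suc k)" "inj_on f ?A" for g and f :: "nat \<Rightarrow> nat"
    using map_permutation_permutes[of f ?A "f ` ?A"] evenperm_map_permutation[of f ?A]
      wperm0_permutes[OF that(1)] that(2) permutation_permutes
    by (metis finite_atLeastLessThan finite_imageI inj_on_imp_bij_betw)
  have "inj_on (\<lambda>m. 2 * m) ?A" "inj_on (\<lambda>m. 2 * m + 1) ?A"
    by (auto simp: inj_on_def)
  note l1 = lift[OF assms(1) this(1)] and l2 = lift[OF assms(2) this(2)]
  have "permutation (if p then swap_pairs (2 ^ Suc k) else id)"
    "evenperm (if p then swap_pairs (2 ^ Suc k) else id)"
    using swap_pairs_permutes[of "2 ^ Suc k"] evenperm_swap_pairs[of "2 ^ Suc k"]
    by (auto simp: permutation_permutes)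
  then show ?thesis
    unfolding wperm0_WNode[OF assms] using l1 l2
    by (simp add: evenperm_comp permutation_compose)
qed

lemma Gset_iff_evenperm:
  "g \<in> Gset (Suc k) \<longleftrightarrow> g \<in> Bset (Suc k) \<and> evenperm (wperm0 (Suc k) g)"
proof (induct k arbitrary: g)
  case 0
  have "wperm0 (Suc 0) (WLeaf b) = (if b then transpose 0 1 else id)" for b
    by (auto simp: fun_eq_iff wperm0_def restrict_id_def transpose_def)
  then show ?case
    by (auto simp: evenperm_swap)
next
  case (Suc k)
  show ?case
    using Suc evenperm_wperm0_WNode evenperm_wperm0_wmult wmult_in_Bset by fastforce
qed

lemma Gset_subset_Bset: "Gset (Suc k) \<subseteq> Bset (Suc k)"
  using Gset_iff_evenperm by blast

lemma wone_in_Gset: "wone (Suc k) \<in> Gset (Suc k)"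
  by (simp add: Gset_iff_evenperm wone_in_Bset wperm0_wone)

lemma wmult_in_Gset: "g \<in> Gset (Suc k) \<Longrightarrow> h \<in> Gset (Suc k) \<Longrightarrow> wmult g h \<in> Gset (Suc k)"
  by (simp add: Gset_iff_evenperm wmult_in_Bset evenperm_wperm0_wmult)

lemma winv_in_Gset:
  assumes "g \<in> Gset (Suc k)"
  shows "winv g \<in> Gset (Suc k)"
proof -
  have g: "g \<in> Bset (Suc k)" "evenperm (wperm0 (Suc k) g)"
    using assms Gset_iff_evenperm by blast+
  then have "evenperm (wperm0 (Suc k) (wmult g (winv g)))"
    by (simp add: wmult_winv wperm0_wone)
  then show ?thesis
    using g evenperm_wperm0_wmult[OF g(1) winv_in_Bset] by (simp add: Gset_iff_evenperm winv_in_Bset)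
qed

lemma finite_Bset: "finite (Bset (Suc k))"
  and card_Bset: "2 * card (Bset (Suc k)) = 2 ^ 2 ^ Suc k"
proof (induct k)
  case 0
  have "Bset (Suc 0) = {WLeaf False, WLeaf True}"
    by auto
  then show "finite (Bset (Suc 0))" "2 * card (Bset (Suc 0)) = 2 ^ 2 ^ Suc 0"
    by simp_all
next
  case (Suc k)
  let ?B = "Bset (Suc k)"
  have B: "Bset (Suc (Suc k)) = (\<lambda>(g1, g2, p). WNode g1 g2 p) ` (?B \<times> ?B \<times> UNIV)"
    by (auto simp: image_iff)
  have "inj_on (\<lambda>(g1, g2, p). WNode g1 g2 p) (?B \<times> ?B \<times> UNIV)"
    by (auto simp: inj_on_def)
  then have "2 * card (Bset (Suc (Suc k))) = (2 * card ?B) * (2 * card ?B)"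
    unfolding B by (simp add: card_image card_cartesian_product)
  also have "\<dots> = 2 ^ 2 ^ Suc (Suc k)"
    using Suc.hyps(2) by (simp flip: power_add)
  finally show "2 * card (Bset (Suc (Suc k))) = 2 ^ 2 ^ Suc (Suc k)" .
  show "finite (Bset (Suc (Suc k)))"
    unfolding B using Suc.hyps(1) by simp
qed

lemma inj_on_wmult:
  assumes "t \<in> Bset (Suc k)"
  shows "inj_on (wmult t) (Bset (Suc k))"
proof (rule inj_onI)
  fix g h
  assume g: "g \<in> Bset (Suc k)" and h: "h \<in> Bset (Suc k)" and "wmult t g = wmult t h"
  then have "wperm0 (Suc k) t \<circ> wperm0 (Suc k) g = wperm0 (Suc k) t \<circ> wperm0 (Suc k) h"
    using assms by (simp flip: wperm0_wmult)
  then have "wperm0 (Suc k) g = wperm0 (Suc k) h"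
    using permutes_inj[OF wperm0_permutes[OF assms]] by (simp add: fun_eq_iff inj_eq)
  then show "g = h"
    using wperm0_inj g h by blast
qed

fun wodd :: "nat \<Rightarrow> wr" where
  "wodd 0 = WLeaf True"
| "wodd (Suc k) = WNode (wodd k) (wone (Suc k)) False"

lemma wodd_in_Bset_Diff_Gset: "wodd k \<in> Bset (Suc k) - Gset (Suc k)"
  by (induct k) (auto simp: wone_in_Bset wmult_wone)

lemma card_Gset: "card (Gset (Suc k)) = 2 ^ (2 ^ Suc k - 2)"
proof -
  let ?B = "Bset (Suc k)" and ?G = "Gset (Suc k)" and ?t = "wodd k"
  have t: "?t \<in> ?B" "\<not> evenperm (wperm0 (Suc k) ?t)"
    using wodd_in_Bset_Diff_Gset Gset_iff_evenperm by auto
  note GB = Gset_subset_Bset[of k]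
  have swap: "wmult ?t g \<in> ?G \<longleftrightarrow> g \<notin> ?G" if "g \<in> ?B" for g
    using that t evenperm_wperm0_wmult Gset_iff_evenperm wmult_in_Bset by blast
  have inj: "inj_on (wmult ?t) A" if "A \<subseteq> ?B" for A
    using inj_on_wmult[OF t(1)] that by (rule inj_on_subset)
  have "card ?G \<le> card (?B - ?G)"
    using swap GB inj[of ?G] wmult_in_Bset[OF t(1)] finite_Bset
    by (intro card_inj_on_le[where f = "wmult ?t"]) auto
  moreover have "card (?B - ?G) \<le> card ?G"
    using swap GB inj[of "?B - ?G"] wmult_in_Bset[OF t(1)] finite_subset[OF GB finite_Bset]
    by (intro card_inj_on_le[where f = "wmult ?t"]) auto
  moreover have "card ?B = card ?G + card (?B - ?G)"
    using card_Diff_subset[OF finite_subset[OF GB finite_Bset] GB] card_mono[OF finite_Bset GB]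
    by simp
  ultimately have "4 * card ?G = 2 ^ 2 ^ Suc k"
    using card_Bset[of k] by simp
  also have "\<dots> = 2 ^ (2 + (2 ^ Suc k - 2))"
  proof -
    have "2 \<le> (2::nat) ^ Suc k"
      by simp
    then show ?thesis
      by (simp only: le_add_diff_inverse)
  qed
  also have "\<dots> = 4 * 2 ^ (2 ^ Suc k - 2)"
    by (simp add: power_add)
  finally show ?thesis
    by simp
qed

lemma multiplicity_two_fact_double:
  "multiplicity (2::nat) (fact (2 * n)) = n + multiplicity 2 (fact n :: nat)"
proof (induct n)
  case (Suc n)
  let ?v = "multiplicity (2::nat)"
  have two: "prime_elem (2::nat)"
    by simp
  have v_mult: "?v (x * y) = ?v x + ?v y" if "x \<noteq> 0" "y \<noteq> 0" for x y
    using prime_elem_multiplicity_mult_distrib[OF two that] .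
  have fact_eq: "fact (2 * Suc n) = 2 * (Suc n * (2 * n + 1) * fact (2 * n))"
    by (simp add: algebra_simps)
  have "Suc n * (2 * n + 1) * fact (2 * n) \<noteq> (0::nat)"
    by simp
  then have "?v (fact (2 * Suc n)) = Suc (?v (Suc n * (2 * n + 1) * fact (2 * n)))"
    unfolding fact_eq by (rule multiplicity_times_same[OF _ prime_elem_not_unit[OF two]]) simp
  also have "?v (Suc n * (2 * n + 1) * fact (2 * n)) = ?v (Suc n * (2 * n + 1)) + ?v (fact (2 * n))"
    by (rule v_mult) simp_all
  also have "?v (Suc n * (2 * n + 1)) = ?v (Suc n) + ?v (2 * n + 1)"
    by (rule v_mult) simp_all
  also have "?v (2 * n + 1) = 0"
    by (simp add: not_dvd_imp_multiplicity_0)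
  also have "?v (fact (2 * n)) = n + ?v (fact n)"
    by (rule Suc.hyps)
  finally have "?v (fact (2 * Suc n)) = Suc (?v (Suc n) + (n + ?v (fact n)))"
    by simp
  moreover have "?v (fact (Suc n)) = ?v (Suc n) + ?v (fact n)"
    using v_mult[of "Suc n" "fact n"] by (simp only: fact_Suc of_nat_id) simp
  ultimately show ?case
    by simp
qed simp

lemma multiplicity_two_fact_power_two: "multiplicity (2::nat) (fact (2 ^ k)) = 2 ^ k - 1"
proof (induct k)
  case (Suc k)
  then show ?case
    using one_le_power[of "2::nat" k] by (simp add: multiplicity_two_fact_double)
qed simp

lemma multiplicity_two_order_alt_group:
  assumes "n \<ge> 2"
  shows "Suc (multiplicity (2::nat) (order (alt_group n))) = multiplicity 2 (fact n :: nat)"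
proof -
  have "fact n = 2 * order (alt_group n)"
    using alt_group_card_carrier[OF assms] by (simp add: order_def)
  moreover have "order (alt_group n) \<noteq> 0"
    using calculation by (metis fact_nonzero mult_0_right)
  ultimately show ?thesis
    by (simp add: multiplicity_times_same prime_elem_not_unit)
qed

definition wperm :: "nat \<Rightarrow> wr \<Rightarrow> nat \<Rightarrow> nat" where
  "wperm k g = map_permutation {0..<2 ^ k} Suc (wperm0 k g)"

lemma bij_betw_Suc_atLeastLessThan: "bij_betw Suc {0..<n} {1..n}"
  by (simp add: bij_betw_def image_Suc_atLeastLessThan atLeastLessThanSuc_atLeastAtMost)

lemma wperm_permutes: "g \<in> Bset (Suc k) \<Longrightarrow> wperm (Suc k) g permutes {1..2 ^ Suc k}"
  unfolding wperm_def by (intro map_permutation_permutes bij_betw_Suc_atLeastLessThan wperm0_permutes)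

lemma wperm_in_alt_group_iff:
  assumes "g \<in> Bset (Suc k)"
  shows "wperm (Suc k) g \<in> carrier (alt_group (2 ^ Suc k)) \<longleftrightarrow> g \<in> Gset (Suc k)"
  using assms wperm_permutes[OF assms] wperm0_permutes[OF assms]
  by (simp add: alt_group_carrier Gset_iff_evenperm wperm_def evenperm_map_permutation)

lemma wperm_wmult:
  assumes "g \<in> Bset (Suc k)" "h \<in> Bset (Suc k)"
  shows "wperm (Suc k) (wmult g h) = wperm (Suc k) g \<circ> wperm (Suc k) h"
  using assms wperm0_permutes[OF assms(2)]
  by (simp add: wperm_def wperm0_wmult map_permutation_compose')

lemma wperm_wone: "wperm k (wone k) = id"
  by (simp add: wperm_def wperm0_wone map_permutation_id')

lemma inj_on_wperm: "inj_on (wperm (Suc k)) (Bset (Suc k))"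
proof (rule inj_onI)
  fix g h
  assume g: "g \<in> Bset (Suc k)" and h: "h \<in> Bset (Suc k)" and "wperm (Suc k) g = wperm (Suc k) h"
  moreover have "map_permutation {1..2 ^ Suc k} (\<lambda>n. n - 1) (wperm (Suc k) f) = wperm0 (Suc k) f"
    if "f \<in> Bset (Suc k)" for f
    unfolding wperm_def
    by (rule map_permutation_compose_inv[OF bij_betw_Suc_atLeastLessThan wperm0_permutes[OF that]]) simp
  ultimately have "wperm0 (Suc k) g = wperm0 (Suc k) h"
    by metis
  then show "g = h"
    using wperm0_inj g h by blast
qed

lemma subgroup_wperm_Gset: "subgroup (wperm (Suc k) ` Gset (Suc k)) (alt_group (2 ^ Suc k))"
proof (rule group.subgroupI[OF alt_group_is_group])
  note GB = Gset_subset_Bset[of k]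
  show "wperm (Suc k) ` Gset (Suc k) \<subseteq> carrier (alt_group (2 ^ Suc k))"
    using GB wperm_in_alt_group_iff by blast
  show "wperm (Suc k) ` Gset (Suc k) \<noteq> {}"
    using wone_in_Gset by blast
  show "a \<otimes>\<^bsub>alt_group (2 ^ Suc k)\<^esub> b \<in> wperm (Suc k) ` Gset (Suc k)"
    if ab: "a \<in> wperm (Suc k) ` Gset (Suc k)" "b \<in> wperm (Suc k) ` Gset (Suc k)" for a b
  proof -
    obtain g h where gh: "g \<in> Gset (Suc k)" "h \<in> Gset (Suc k)"
      and "a = wperm (Suc k) g" "b = wperm (Suc k) h"
      using ab by blast
    moreover have "g \<in> Bset (Suc k)" "h \<in> Bset (Suc k)"
      using gh GB by blast+
    ultimately have "a \<otimes>\<^bsub>alt_group (2 ^ Suc k)\<^esub> b = wperm (Suc k) (wmult g h)"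
      by (simp add: alt_group_mult wperm_wmult)
    then show ?thesis
      using wmult_in_Gset[OF gh] by blast
  qed
  show "inv\<^bsub>alt_group (2 ^ Suc k)\<^esub> a \<in> wperm (Suc k) ` Gset (Suc k)"
    if a: "a \<in> wperm (Suc k) ` Gset (Suc k)" for a
  proof -
    obtain g where g: "g \<in> Gset (Suc k)" "a = wperm (Suc k) g"
      using a by blast
    have "g \<in> Bset (Suc k)" "winv g \<in> Bset (Suc k)"
      using g(1) GB winv_in_Bset by blast+
    then have "inv' a = wperm (Suc k) (winv g)"
      by (intro inv_unique_comp)
        (simp_all add: g(2) wmult_winv wmult_winv_left wperm_wone flip: wperm_wmult)
    then show ?thesis
      using g \<open>g \<in> Bset (Suc k)\<close> winv_in_Gset alt_group_inv_equality wperm_in_alt_group_iff by auto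
  qed
qed

theorem mainTheorem13:
  fixes k :: nat
  assumes "k \<ge> 1"
  shows "\<exists>H. sylow_subgroup 2 H (alt_group (2 ^ k))
             \<and> Ggrp k \<cong> (alt_group (2 ^ k))\<lparr>carrier := H\<rparr>"
proof -
  obtain j where k: "k = Suc j"
    using assms by (cases k) auto
  define H where "H = wperm k ` Gset k"
  have inj: "inj_on (wperm k) (Gset k)"
    unfolding k using inj_on_wperm Gset_subset_Bset by (rule inj_on_subset)
  have "2 \<le> (2::nat) ^ k"
    using k by simp
  then have "multiplicity 2 (order (alt_group (2 ^ k))) = 2 ^ k - 2"
    using multiplicity_two_order_alt_group multiplicity_two_fact_power_two
    by (metis diff_Suc_1 diff_diff_left one_add_one plus_1_eq_Suc)
  moreover have "card H = 2 ^ (2 ^ k - 2)"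
    unfolding H_def card_image[OF inj] unfolding k by (rule card_Gset)
  ultimately have "sylow_subgroup 2 H (alt_group (2 ^ k))"
    using subgroup_wperm_Gset unfolding sylow_subgroup_def H_def k by simp
  moreover have "wperm k \<in> iso (Ggrp k) ((alt_group (2 ^ k))\<lparr>carrier := H\<rparr>)"
    using inj Gset_iff_evenperm
    by (auto simp: iso_def hom_def Ggrp_def bij_betw_def H_def alt_group_mult k wperm_wmult)
  ultimately show ?thesis
    using is_isoI by blast
qed

end
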